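(* Fix positive integers $a$ and $b$. Let $B$ and $Z$ be independent random variables with $B\sim\mathrm{Beta}(a,b)$ and $Z\sim\mathrm{GGa}(a+b+1,2)$, and let $V=2BZ$. Then, as $t\to\infty$, $$\mathbb{P}(V>t)\sim c\Big(\frac{a+b+2}{2},a\Big)\,t^{-1+a-b}\exp(-t^2/4).$$
   Context: $\mathrm{Beta}(a,b)$ is the distribution with density proportional to $x^{a-1}(1-x)^{b-1}\mathbf{1}_{\{x\in[0,1]\}}$. $\mathrm{GGa}(\alpha,\beta)$ is the generalized gamma distribution with density proportional to $x^{\alpha-1}e^{-x^{\beta}}\mathbf{1}_{\{x>0\}}$. The constant is $c(\alpha,\beta)=\dfrac{\Gamma(2\alpha-2)}{2^{\beta-1}\Gamma(\alpha-1/2)\Gamma(\beta)}$. Notation $f(t)\sim g(t)$ means $f(t)/g(t)\to1$. *)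

theory Defs
  imports "HOL-Probability.Probability" "HOL-Library.Landau_Symbols"
begin

definition beta_kernel :: "real \<Rightarrow> real \<Rightarrow> real \<Rightarrow> real" where
  "beta_kernel a b x = indicator {0..1} x * x powr (a - 1) * (1 - x) powr (b - 1)"

definition beta_density :: "real \<Rightarrow> real \<Rightarrow> real \<Rightarrow> real" where
  "beta_density a b x = beta_kernel a b x / (LINT y|lborel. beta_kernel a b y)"

definition ggamma_kernel :: "real \<Rightarrow> real \<Rightarrow> real \<Rightarrow> real" where
  "ggamma_kernel \<alpha> \<beta> x = indicator {0<..} x * x powr (\<alpha> - 1) * exp (- (x powr \<beta>))"

definition ggamma_density :: "real \<Rightarrow> real \<Rightarrow> real \<Rightarrow> real" where
  "ggamma_density \<alpha> \<beta> x = ggamma_kernel \<alpha> \<beta> x / (LINT y|lborel. ggamma_kernel \<alpha> \<beta> y)"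

definition c_const :: "real \<Rightarrow> real \<Rightarrow> real" where
  "c_const \<alpha> \<beta> = Gamma (2 * \<alpha> - 2) / (2 powr (\<beta> - 1) * Gamma (\<alpha> - 1/2) * Gamma \<beta>)"

end

theory Submission
  imports Defs "HOL-Real_Asymp.Real_Asymp"
begin

text \<open>
  Put \<open>s = t/2\<close>, so that \<open>P(V > t) = \<integral>\<integral> f\<^sub>B(x) f\<^sub>Z(z) [x z > s] dz dx\<close>.
  The substitutions \<open>z = s/x + q/(s x)\<close> (for fixed \<open>x\<close>) and \<open>x = 1 - y/s\<^sup>2\<close> turn this into
  \<open>s\<^bsup>a-b-1\<^esup> e\<^bsup>-s\<^sup>2\<^esup>\<close> times a normalising constant times an integral over \<open>y, q > 0\<close> of
  \<open>y\<^bsup>b-1\<^esup> (1 + q/s\<^sup>2)\<^bsup>a+b\<^esup> (1 - y/s\<^sup>2)\<^bsup>-b-2\<^esup> exp (s\<^sup>2 - s\<^sup>2 w\<^sup>2)\<close> with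
  \<open>w = (1 + q/s\<^sup>2)/(1 - y/s\<^sup>2)\<close>. As \<open>s \<rightarrow> \<infinity>\<close> the integrand tends to \<open>y\<^bsup>b-1\<^esup> e\<^bsup>-2y-2q\<^esup>\<close>,
  and for \<open>s \<ge> 1\<close> it is dominated by a multiple of \<open>y\<^bsup>b-1\<^esup> e\<^bsup>-y-q\<^esup>\<close>, because the Gaussian
  factor in \<open>w \<ge> 1\<close> absorbs every power of \<open>w\<close>. Dominated convergence gives the limit
  \<open>(b-1)!/2\<^bsup>b+1\<^esup>\<close>, and the Beta and Gamma normalisations assemble into \<open>c((a+b+2)/2, a)\<close>.
\<close>

lemma Gamma_of_nat_plus_half:
  "Gamma (real k + 1/2) = sqrt pi * fact (2*k) / (2^(2*k) * fact k)"
proof (induction k)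
  case 0
  then show ?case by (simp add: Gamma_one_half_real)
next
  case (Suc k)
  have "Gamma (real (Suc k) + 1/2) = (real k + 1/2) * Gamma (real k + 1/2)"
    using Gamma_plus1[of "real k + 1/2"] by (simp add: add_ac nonpos_Ints_def)
  also have "\<dots> = (real k + 1/2) * (sqrt pi * fact (2*k) / (2^(2*k) * fact k))"
    using Suc by simp
  also have "\<dots> = sqrt pi * fact (2 * Suc k) / (2^(2 * Suc k) * fact (Suc k))"
  proof -
    have "fact (2 * Suc k) = (2 * real k + 2) * (2 * real k + 1) * (fact (2*k) :: real)"
      by (simp add: algebra_simps)
    moreover have "(2::real)^(2 * Suc k) = 4 * 2^(2*k)" by simp
    moreover have "(fact k :: real) > 0" by simp
    ultimately show ?thesis by (simp add: divide_simps) (simp add: algebra_simps)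
  qed
  finally show ?case .
qed

lemma ggamma_kernel_2_eq:
  assumes "n \<ge> 1"
  shows "ggamma_kernel (real n + 1) 2 y = indicator {0..} y *\<^sub>R (exp (-y\<^sup>2) * y^n)"
  using assms by (cases y "0::real" rule: linorder_cases)
    (auto simp: ggamma_kernel_def powr_realpow)

lemma integral_ggamma_kernel_2:
  assumes "n \<ge> 1"
  shows "(LINT y|lborel. ggamma_kernel (real n + 1) 2 y) = Gamma ((real n + 1) / 2) / 2"
proof -
  have kernel: "ggamma_kernel (real n + 1) 2 = (\<lambda>y. indicator {0..} y *\<^sub>R (exp (-y\<^sup>2) * y^n))"
    using ggamma_kernel_2_eq[OF assms] by auto
  show ?thesis
  proof (cases "even n")
    case True
    then obtain k where k: "n = 2*k" by auto
    have "Gamma ((real n + 1) / 2) = Gamma (real k + 1/2)"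
      using k by (simp add: field_simps)
    then show ?thesis
      unfolding kernel unfolding k
      using has_bochner_integral_integral_eq[OF gaussian_moment_even_pos[of k]]
      by (simp add: Gamma_of_nat_plus_half)
  next
    case False
    then obtain k where k: "n = 2*k + 1" using oddE by blast
    have "(real n + 1) / 2 = 1 + real k" using k by (simp add: field_simps)
    then have "Gamma ((real n + 1) / 2) = fact k"
      by (simp only: Gamma_fact)
    then show ?thesis
      unfolding kernel unfolding k
      using has_bochner_integral_integral_eq[OF gaussian_moment_odd_pos[of k]] by simp
  qed
qed

lemma beta_kernel_measurable [measurable]: "beta_kernel a b \<in> borel_measurable borel"
  unfolding beta_kernel_def by measurable

lemma ggamma_kernel_measurable [measurable]: "ggamma_kernel a b \<in> borel_measurable borel"
  unfolding ggamma_kernel_def by measurable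

lemma integral_beta_kernel:
  assumes "a > 0" "b > (0::real)"
  shows "(LINT y|lborel. beta_kernel a b y) = Beta a b"
proof -
  have "(\<integral>\<^sup>+x. ennreal (indicator {0..1} x * (x powr (a - 1) * (1 - x) powr (b - 1))) \<partial>lborel)
      = ennreal (Beta a b)"
    by (rule nn_integral_has_integral_lebesgue[OF _ has_integral_Beta_real[OF assms]]) auto
  moreover have "Beta a b \<ge> 0" using assms by (simp add: Beta_def)
  ultimately show ?thesis
    by (subst integral_eq_nn_integral) (auto simp: beta_kernel_def mult.assoc)
qed

lemma beta_kernel_nonneg: "beta_kernel a b x \<ge> 0"
  unfolding beta_kernel_def by (auto simp: indicator_def)

lemma ggamma_kernel_nonneg: "ggamma_kernel a b x \<ge> 0"
  unfolding ggamma_kernel_def by (auto simp: indicator_def)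

text \<open>Also at the endpoints \<open>x = 0, 1\<close>, because \<open>0 powr p = 0\<close> for every \<open>p\<close>.\<close>

lemma beta_kernel_eq_0: "\<not> (0 < x \<and> x < 1) \<Longrightarrow> beta_kernel a b x = 0"
  by (cases "x = 0 \<or> x = 1") (auto simp: beta_kernel_def indicator_def)

lemma beta_density_nonneg: "beta_density a b x \<ge> 0"
  by (simp add: beta_density_def beta_kernel_nonneg integral_nonneg_AE)

lemma ggamma_density_nonneg: "ggamma_density a b x \<ge> 0"
  by (simp add: ggamma_density_def ggamma_kernel_nonneg integral_nonneg_AE)

definition tail_kernel :: "nat \<Rightarrow> nat \<Rightarrow> real \<Rightarrow> real \<Rightarrow> real \<Rightarrow> real" where
  "tail_kernel n b s y q = indicator {0<..<s\<^sup>2} y * indicator {0<..} q *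
     (y^(b-1) * (1 + q/s\<^sup>2)^n / (1 - y/s\<^sup>2)^(b+2)
        * exp (s\<^sup>2 - s\<^sup>2 * ((1 + q/s\<^sup>2) / (1 - y/s\<^sup>2))\<^sup>2))"

definition tail_kernel_limit :: "nat \<Rightarrow> real \<Rightarrow> real \<Rightarrow> real" where
  "tail_kernel_limit b y q = indicator {0<..} y * indicator {0<..} q * (y^(b-1) * exp (-2*y - 2*q))"

definition tail_kernel_majorant :: "nat \<Rightarrow> nat \<Rightarrow> real \<Rightarrow> real \<Rightarrow> real" where
  "tail_kernel_majorant m b y q =
     fact m * exp 1 * (indicator {0<..} y * y^(b-1) * exp (-y)) * (indicator {0<..} q * exp (-q))"

definition tail_integral :: "nat \<Rightarrow> nat \<Rightarrow> real \<Rightarrow> real" where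
  "tail_integral n b s = (LINT p|(lborel \<Otimes>\<^sub>M lborel). tail_kernel n b s (fst p) (snd p))"

lemma tail_kernel_measurable [measurable (raw)]:
  assumes [measurable]: "f \<in> borel_measurable M" "g \<in> borel_measurable M"
  shows "(\<lambda>x. tail_kernel n b s (f x) (g x)) \<in> borel_measurable M"
  unfolding tail_kernel_def by measurable

lemma tail_kernel_limit_measurable [measurable]:
  "(\<lambda>p. tail_kernel_limit b (fst p) (snd p)) \<in> borel_measurable (lborel \<Otimes>\<^sub>M lborel)"
  unfolding tail_kernel_limit_def by measurable

lemma tail_kernel_majorant_measurable [measurable]:
  "(\<lambda>p. tail_kernel_majorant m b (fst p) (snd p)) \<in> borel_measurable (lborel \<Otimes>\<^sub>M lborel)"
  unfolding tail_kernel_majorant_def by measurable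

lemma power_le_fact_mult_exp:
  assumes "(x::real) \<ge> 0"
  shows "x^m \<le> fact m * exp x"
proof -
  have "x^m / fact m \<le> (\<Sum>n\<le>m. x^n / fact n)"
    using assms by (intro member_le_sum) auto
  also have "\<dots> \<le> exp x"
    using assms summable_exp_generic[of x]
    by (auto simp: exp_def divide_inverse ac_simps intro!: sum_le_suminf)
  finally show ?thesis by (simp add: divide_simps mult.commute)
qed

lemma power_mult_exp_le:
  assumes "(w::real) \<ge> 1"
  shows "w^m * exp (-(w\<^sup>2 - 1)/2) \<le> fact m * exp 1"
proof -
  have "w^m * exp (-(w\<^sup>2 - 1)/2) \<le> fact m * exp w * exp (-(w\<^sup>2 - 1)/2)"
    using power_le_fact_mult_exp[of w m] assms by (intro mult_right_mono) auto
  also have "\<dots> = fact m * exp (w - (w\<^sup>2 - 1)/2)"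
    by (simp add: exp_add[symmetric] field_simps)
  also have "\<dots> \<le> fact m * exp 1"
    using sum_power2_ge_zero[of "w - 1" 0] by (simp add: power2_diff field_simps)
  finally show ?thesis .
qed

text \<open>The exponent of \<^const>\<open>tail_kernel\<close> splits into a Gaussian in \<open>w\<close>, which absorbs the
  polynomial prefactor, and a part decaying exponentially in \<open>y + q\<close> uniformly in \<open>s \<ge> 1\<close>.\<close>

lemma tail_exponent_le:
  fixes s y q :: real
  assumes s: "s\<^sup>2 \<ge> 1" and y: "0 < y" "y < s\<^sup>2" and q: "q > 0"
  defines "w \<equiv> (1 + q/s\<^sup>2) / (1 - y/s\<^sup>2)"
  shows "w \<ge> 1" and "s\<^sup>2 - s\<^sup>2 * w\<^sup>2 \<le> -(w\<^sup>2 - 1)/2 - (y + q)"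
proof -
  define x where "x = 1 - y/s\<^sup>2"
  have "s\<^sup>2 > 0" using s by linarith
  then have x: "0 < x" "x < 1" using y by (auto simp: x_def field_simps)
  have "q/s\<^sup>2 > 0" using q \<open>s\<^sup>2 > 0\<close> by simp
  have w_eq: "w = (1 + q/s\<^sup>2) / x" by (simp add: w_def x_def)
  show w1: "w \<ge> 1" using x \<open>q/s\<^sup>2 > 0\<close> by (simp add: w_eq le_divide_eq)
  have xw: "x * w = 1 + q/s\<^sup>2" using x by (simp add: w_eq)
  have "(1 - x) * (w - 1) = w - 1 - x * w + x" by (simp add: algebra_simps)
  also have "\<dots> = w - 1 - (y + q)/s\<^sup>2" using xw by (simp add: x_def add_divide_distrib algebra_simps)
  finally have "w - 1 - (y + q)/s\<^sup>2 = (1 - x) * (w - 1)" ..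
  moreover have "(1 - x) * (w - 1) \<ge> 0" using x w1 by simp
  ultimately have "(y + q)/s\<^sup>2 \<le> w - 1" by linarith
  then have "s\<^sup>2 * ((y + q)/s\<^sup>2) \<le> s\<^sup>2 * (w - 1)"
    using \<open>s\<^sup>2 > 0\<close> by (intro mult_left_mono) auto
  then have "s\<^sup>2 * (w - 1) \<ge> y + q"
    using \<open>s\<^sup>2 > 0\<close> by simp
  have "w\<^sup>2 - 1 \<ge> 2 * (w - 1)"
    using sum_power2_ge_zero[of "w - 1" 0] by (simp add: power2_diff)
  then have "(s\<^sup>2/2) * (2 * (w - 1)) \<le> (s\<^sup>2 - 1/2) * (w\<^sup>2 - 1)"
    using s w1 by (intro mult_mono) auto
  moreover have "(s\<^sup>2/2) * (2 * (w - 1)) = s\<^sup>2 * (w - 1)" by simp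
  ultimately have "(s\<^sup>2 - 1/2) * (w\<^sup>2 - 1) \<ge> y + q"
    using \<open>s\<^sup>2 * (w - 1) \<ge> y + q\<close> by linarith
  then show "s\<^sup>2 - s\<^sup>2 * w\<^sup>2 \<le> -(w\<^sup>2 - 1)/2 - (y + q)"
    by (simp add: algebra_simps)
qed

lemma tail_kernel_nonneg: "tail_kernel n b s y q \<ge> 0"
proof (cases "y \<in> {0<..<s\<^sup>2} \<and> q > 0")
  case True
  then have "s\<^sup>2 > 0" by auto
  with True have "1 - y/s\<^sup>2 > 0" by (simp add: field_simps)
  then show ?thesis using True unfolding tail_kernel_def by simp
qed (auto simp: tail_kernel_def indicator_def)

lemma tail_kernel_le_majorant:
  assumes s: "s \<ge> 1"
  shows "tail_kernel n b s y q \<le> tail_kernel_majorant (n+b+2) b y q"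
proof (cases "y \<in> {0<..<s\<^sup>2} \<and> q > 0")
  case False
  then show ?thesis unfolding tail_kernel_def tail_kernel_majorant_def by (auto simp: indicator_def)
next
  case True
  define x where "x = 1 - y/s\<^sup>2"
  define u where "u = 1 + q/s\<^sup>2"
  define w where "w = u / x"
  have s2: "s\<^sup>2 \<ge> 1" using s by (simp add: one_le_power)
  then have "s\<^sup>2 > 0" by linarith
  then have x: "0 < x" "x < 1" using True by (auto simp: x_def field_simps)
  have u: "u \<ge> 1" using True s2 by (auto simp: u_def)
  have w1: "w \<ge> 1" and exponent: "s\<^sup>2 - s\<^sup>2 * w\<^sup>2 \<le> -(w\<^sup>2 - 1)/2 - (y + q)"
    using tail_exponent_le[OF s2, of y q] True by (auto simp: w_def u_def x_def)
  have "u^n / x^(b+2) = u^n * (1/x)^(b+2)" by (simp add: power_divide)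
  also have "\<dots> \<le> w^n * w^(b+2)"
    using u x by (intro mult_mono power_mono) (auto simp: w_def field_simps)
  also have "\<dots> = w^(n+b+2)" by (simp add: power_add)
  finally have prefactor: "u^n / x^(b+2) \<le> w^(n+b+2)" .
  have "tail_kernel n b s y q = y^(b-1) * (u^n / x^(b+2)) * exp (s\<^sup>2 - s\<^sup>2 * w\<^sup>2)"
    using True by (simp add: tail_kernel_def x_def u_def w_def)
  also have "\<dots> \<le> y^(b-1) * w^(n+b+2) * exp (-(w\<^sup>2 - 1)/2 - (y + q))"
    using True prefactor exponent x u w1 by (intro mult_mono) auto
  also have "\<dots> = y^(b-1) * (w^(n+b+2) * exp (-(w\<^sup>2 - 1)/2)) * (exp (-y) * exp (-q))"
  proof -
    have "exp (-(w\<^sup>2 - 1)/2 - (y + q)) = exp (-(w\<^sup>2 - 1)/2) * (exp (-y) * exp (-q))"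
      unfolding exp_add[symmetric] by (rule arg_cong[where f = exp]) simp
    then show ?thesis by (simp only: mult.assoc)
  qed
  also have "\<dots> \<le> y^(b-1) * (fact (n+b+2) * exp 1) * (exp (-y) * exp (-q))"
  proof (rule mult_right_mono[OF mult_left_mono[OF power_mult_exp_le[OF w1]]])
    show "0 \<le> y^(b-1)" using True by simp
  qed simp
  also have "\<dots> = tail_kernel_majorant (n+b+2) b y q"
    using True by (simp add: tail_kernel_majorant_def)
  finally show ?thesis .
qed

lemma tail_kernel_tendsto: "((\<lambda>s. tail_kernel n b s y q) \<longlongrightarrow> tail_kernel_limit b y q) at_top"
proof (cases "y > 0 \<and> q > 0")
  case False
  then show ?thesis by (simp add: tail_kernel_def tail_kernel_limit_def indicator_def)
next
  case True
  have "\<forall>\<^sub>F s in at_top. y < (s::real)\<^sup>2" by real_asymp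
  then have "\<forall>\<^sub>F s in at_top. y^(b-1) * (1 + q/s\<^sup>2)^n / (1 - y/s\<^sup>2)^(b+2)
      * exp (s\<^sup>2 - s\<^sup>2 * ((1 + q/s\<^sup>2) / (1 - y/s\<^sup>2))\<^sup>2) = tail_kernel n b s y q"
    by eventually_elim (use True in \<open>simp add: tail_kernel_def\<close>)
  moreover have lim: "((\<lambda>s::real. 1 + q/s\<^sup>2) \<longlongrightarrow> 1) at_top" "((\<lambda>s::real. 1 - y/s\<^sup>2) \<longlongrightarrow> 1) at_top"
    "((\<lambda>s::real. s\<^sup>2 - s\<^sup>2 * ((1 + q/s\<^sup>2) / (1 - y/s\<^sup>2))\<^sup>2) \<longlongrightarrow> -2*y - 2*q) at_top"
    by real_asymp+
  have "((\<lambda>s. y^(b-1) * (1 + q/s\<^sup>2)^n / (1 - y/s\<^sup>2)^(b+2)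
      * exp (s\<^sup>2 - s\<^sup>2 * ((1 + q/s\<^sup>2) / (1 - y/s\<^sup>2))\<^sup>2)) \<longlongrightarrow> y^(b-1) * 1^n / 1^(b+2) * exp (-2*y - 2*q)) at_top"
    by (intro tendsto_intros lim) auto
  ultimately show ?thesis
    using True by (simp add: tendsto_cong tail_kernel_limit_def)
qed

lemma nn_integral_indicator_power_exp:
  assumes "(l::real) > 0"
  shows "(\<integral>\<^sup>+x. ennreal (indicator {0<..} x * x^k * exp (-(l*x))) \<partial>lborel) = ennreal (fact k / l^(Suc k))"
proof -
  have "(\<integral>\<^sup>+x. ennreal (indicator {0<..} x * x^k * exp (-(l*x))) \<partial>lborel) =
        (\<integral>\<^sup>+x. ennreal (fact k / l^(Suc k)) * ennreal (erlang_density k l x * x^0) \<partial>lborel)"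
  proof (rule nn_integral_cong_AE)
    show "AE x in lborel. ennreal (indicator {0<..} x * x^k * exp (-(l*x))) =
        ennreal (fact k / l^(Suc k)) * ennreal (erlang_density k l x * x^0)"
      using AE_lborel_singleton[of 0]
    proof eventually_elim
      case (elim x)
      then show ?case
        using assms
        by (cases "x > 0") (simp_all add: erlang_density_def ennreal_mult[symmetric] field_simps)
    qed
  qed
  also have "\<dots> = ennreal (fact k / l^(Suc k))"
    using nn_integral_erlang_ith_moment[OF assms, of k 0] by (simp add: nn_integral_cmult)
  finally show ?thesis .
qed

lemma has_bochner_integral_pair_mult:
  fixes f g :: "real \<Rightarrow> real"
  assumes [measurable]: "f \<in> borel_measurable borel" "g \<in> borel_measurable borel"
    and nonneg: "\<And>x. f x \<ge> 0" "\<And>x. g x \<ge> 0" and "A \<ge> 0" "B \<ge> 0"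
    and "(\<integral>\<^sup>+x. ennreal (f x) \<partial>lborel) = ennreal A" "(\<integral>\<^sup>+x. ennreal (g x) \<partial>lborel) = ennreal B"
  shows "has_bochner_integral (lborel \<Otimes>\<^sub>M lborel) (\<lambda>p. f (fst p) * g (snd p)) (A * B)"
proof (rule has_bochner_integral_nn_integral)
  have "(\<integral>\<^sup>+p. ennreal (f (fst p) * g (snd p)) \<partial>(lborel \<Otimes>\<^sub>M lborel)) =
        (\<integral>\<^sup>+x. ennreal (f x) * (\<integral>\<^sup>+y. ennreal (g y) \<partial>lborel) \<partial>lborel)"
    using nonneg
    by (subst lborel.nn_integral_fst[symmetric]) (simp_all add: ennreal_mult nn_integral_cmult)
  also have "\<dots> = ennreal (A * B)"
    using assms by (simp add: nn_integral_multc ennreal_mult)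
  finally show "(\<integral>\<^sup>+p. ennreal (f (fst p) * g (snd p)) \<partial>(lborel \<Otimes>\<^sub>M lborel)) = ennreal (A * B)" .
qed (use assms in auto)

lemma has_bochner_integral_exp_pair:
  assumes "(l::real) > 0"
  shows "has_bochner_integral (lborel \<Otimes>\<^sub>M lborel)
    (\<lambda>p. indicator {0<..} (fst p) * fst p ^ k * exp (-(l * fst p)) * (indicator {0<..} (snd p) * exp (-(l * snd p))))
    (fact k / l^(Suc k) / l)"
proof -
  have "has_bochner_integral (lborel \<Otimes>\<^sub>M lborel)
    (\<lambda>p. indicator {0<..} (fst p) * fst p ^ k * exp (-(l * fst p)) * (indicator {0<..} (snd p) * snd p ^ 0 * exp (-(l * snd p))))
    (fact k / l^(Suc k) * (fact 0 / l^(Suc 0)))"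
    using assms
    by (intro has_bochner_integral_pair_mult nn_integral_indicator_power_exp) (auto simp: indicator_def)
  then show ?thesis by simp
qed

lemma integrable_tail_kernel_majorant:
  "integrable (lborel \<Otimes>\<^sub>M lborel) (\<lambda>p. tail_kernel_majorant m b (fst p) (snd p))"
  using integrable.intros[OF has_bochner_integral_exp_pair[of 1 "b-1"]]
  by (simp add: tail_kernel_majorant_def mult.assoc)

lemma integrable_tail_kernel:
  assumes "s \<ge> 1"
  shows "integrable (lborel \<Otimes>\<^sub>M lborel) (\<lambda>p. tail_kernel n b s (fst p) (snd p))"
proof (rule Bochner_Integration.integrable_bound[OF integrable_tail_kernel_majorant[of "n+b+2" b]])
  show "AE p in lborel \<Otimes>\<^sub>M lborel.
      norm (tail_kernel n b s (fst p) (snd p)) \<le> norm (tail_kernel_majorant (n+b+2) b (fst p) (snd p))"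
  proof (intro AE_I2)
    fix p :: "real \<times> real"
    have "norm (tail_kernel n b s (fst p) (snd p)) = tail_kernel n b s (fst p) (snd p)"
      by (simp add: tail_kernel_nonneg)
    also have "\<dots> \<le> tail_kernel_majorant (n+b+2) b (fst p) (snd p)"
      by (rule tail_kernel_le_majorant[OF assms])
    finally show "norm (tail_kernel n b s (fst p) (snd p)) \<le> norm (tail_kernel_majorant (n+b+2) b (fst p) (snd p))"
      by simp
  qed
qed simp

lemma tail_integral_nonneg: "tail_integral n b s \<ge> 0"
  unfolding tail_integral_def by (simp add: integral_nonneg_AE tail_kernel_nonneg)

lemma tail_integral_tendsto:
  assumes "b > 0"
  shows "(tail_integral n b \<longlongrightarrow> fact (b-1) / 2^(b+1)) at_top"
proof -
  have "(tail_integral n b \<longlongrightarrow> (LINT p|(lborel \<Otimes>\<^sub>M lborel). tail_kernel_limit b (fst p) (snd p))) at_top"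
    unfolding tail_integral_def
  proof (rule integral_dominated_convergence_at_top
      [where w = "\<lambda>p. tail_kernel_majorant (n+b+2) b (fst p) (snd p)"])
    show "\<forall>\<^sub>F s in at_top. AE p in lborel \<Otimes>\<^sub>M lborel.
        norm (tail_kernel n b s (fst p) (snd p)) \<le> tail_kernel_majorant (n+b+2) b (fst p) (snd p)"
      using eventually_ge_at_top[of "1::real"]
      by eventually_elim (auto intro!: AE_I2 simp: tail_kernel_le_majorant[simplified] tail_kernel_nonneg)
  qed (simp_all add: integrable_tail_kernel_majorant tail_kernel_tendsto)
  moreover have "has_bochner_integral (lborel \<Otimes>\<^sub>M lborel) (\<lambda>p. tail_kernel_limit b (fst p) (snd p))
      (fact (b-1) / 2^(b+1))"
    using has_bochner_integral_exp_pair[of 2 "b-1"] assms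
    by (simp add: tail_kernel_limit_def exp_diff exp_minus field_simps)
  ultimately show ?thesis by (simp add: has_bochner_integral_integral_eq)
qed

lemma nn_integral_threshold_subst:
  fixes f :: "real \<Rightarrow> real"
  assumes [measurable]: "f \<in> borel_measurable borel" and nonneg: "\<And>z. f z \<ge> 0"
    and s: "s > 0" and x: "x > 0"
  shows "(\<integral>\<^sup>+z. ennreal (f z) * indicator {z. s < x * z} z \<partial>lborel)
       = (\<integral>\<^sup>+q. ennreal (indicator {0<..} q * f (s/x + q/(s*x)) / (s*x)) \<partial>lborel)"
proof -
  have "(\<integral>\<^sup>+z. ennreal (f z) * indicator {z. s < x * z} z \<partial>lborel)
      = ennreal \<bar>1/(s*x)\<bar> * (\<integral>\<^sup>+q. ennreal (f (s/x + 1/(s*x) * q))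
          * indicator {z. s < x * z} (s/x + 1/(s*x) * q) \<partial>lborel)"
    using s x by (intro nn_integral_real_affine) auto
  also have "\<dots> = (\<integral>\<^sup>+q. ennreal \<bar>1/(s*x)\<bar> * (ennreal (f (s/x + 1/(s*x) * q))
          * indicator {z. s < x * z} (s/x + 1/(s*x) * q)) \<partial>lborel)"
    by (rule nn_integral_cmult[symmetric]) measurable
  also have "\<dots> = (\<integral>\<^sup>+q. ennreal (indicator {0<..} q * f (s/x + q/(s*x)) / (s*x)) \<partial>lborel)"
  proof (rule nn_integral_cong)
    fix q :: real
    have "x * (s/x + 1/(s*x) * q) = s + q/s" using s x by (simp add: field_simps)
    then have "s < x * (s/x + 1/(s*x) * q) \<longleftrightarrow> 0 < q" using s by (simp add: zero_less_divide_iff)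
    then show "ennreal \<bar>1/(s*x)\<bar> * (ennreal (f (s/x + 1/(s*x) * q))
          * indicator {z. s < x * z} (s/x + 1/(s*x) * q))
        = ennreal (indicator {0<..} q * f (s/x + q/(s*x)) / (s*x))"
      using s x nonneg[of "s/x + q/(s*x)"]
      by (auto simp: indicator_def ennreal_mult[symmetric] divide_inverse mult.commute)
  qed
  finally show ?thesis .
qed

lemma powr_of_nat_minus_one: "(x::real) > 0 \<Longrightarrow> n \<ge> 1 \<Longrightarrow> x powr (real n - 1) = x^(n-1)"
  by (simp add: powr_realpow[symmetric] of_nat_diff)

lemma beta_ggamma_kernel_subst_eq:
  fixes a b :: nat and s y q :: real
  assumes ab: "a \<ge> 1" "b \<ge> 1" and s: "s > 0" and y: "0 < y" "y < s\<^sup>2" and q: "q > 0"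
  defines "x \<equiv> 1 - y/s\<^sup>2"
  shows "beta_kernel (real a) (real b) x * ggamma_kernel (real a + real b + 1) 2 (s/x + q/(s*x)) / (s*x) / s\<^sup>2
     = s^(a+b) / s^(2*b+1) * exp (-s\<^sup>2) * tail_kernel (a+b) b s y q"
proof -
  define u where "u = 1 + q/s\<^sup>2"
  have x: "0 < x" "x < 1" using y s by (auto simp: x_def field_simps)
  have u: "u > 0" using q s unfolding u_def by (simp add: add_pos_pos)
  have z: "s/x + q/(s*x) = s*u/x" using s x unfolding u_def by (simp add: field_simps power2_eq_square)
  have bk: "beta_kernel (real a) (real b) x = x^(a-1) * (y/s\<^sup>2)^(b-1)"
    using x ab y s by (simp add: beta_kernel_def x_def powr_of_nat_minus_one)
  have gk: "ggamma_kernel (real a + real b + 1) 2 (s*u/x) = (s*u/x)^(a+b) * exp (-s\<^sup>2) * exp (s\<^sup>2 - s\<^sup>2 * (u/x)\<^sup>2)"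
  proof -
    have "s*u/x > 0" using s u x by simp
    then have "(s*u/x) powr (real a + real b) = (s*u/x)^(a+b)" by (metis of_nat_add powr_realpow)
    with \<open>s*u/x > 0\<close> show ?thesis
      by (simp add: ggamma_kernel_def power_mult_distrib power_divide mult_exp_exp)
  qed
  have tk: "tail_kernel (a+b) b s y q = y^(b-1) * u^(a+b) / x^(b+2) * exp (s\<^sup>2 - s\<^sup>2 * (u/x)\<^sup>2)"
    using y q by (simp add: tail_kernel_def x_def u_def)
  obtain a' b' where "a = Suc a'" "b = Suc b'" using ab by (cases a; cases b) auto
  then show ?thesis
    unfolding z bk gk tk using x s
    by (simp add: power_divide power_mult_distrib field_simps power2_eq_square power_add power_mult)
qed

lemma nn_integral_beta_ggamma_kernel_inner_subst:
  fixes a b :: nat and s x :: real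
  assumes s: "s > 0"
  shows "(\<integral>\<^sup>+z. ennreal (beta_kernel (real a) (real b) x * ggamma_kernel (real a + real b + 1) 2 z)
      * indicator {z. s < x * z} z \<partial>lborel)
    = (\<integral>\<^sup>+q. ennreal (beta_kernel (real a) (real b) x
      * (indicator {0<..} q * ggamma_kernel (real a + real b + 1) 2 (s/x + q/(s*x)) / (s*x))) \<partial>lborel)"
proof (cases "x > 0")
  case True
  have "(\<integral>\<^sup>+z. ennreal (beta_kernel (real a) (real b) x * ggamma_kernel (real a + real b + 1) 2 z)
      * indicator {z. s < x * z} z \<partial>lborel)
    = ennreal (beta_kernel (real a) (real b) x)
      * (\<integral>\<^sup>+z. ennreal (ggamma_kernel (real a + real b + 1) 2 z) * indicator {z. s < x * z} z \<partial>lborel)"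
    by (simp add: ennreal_mult beta_kernel_nonneg ggamma_kernel_nonneg nn_integral_cmult[symmetric]
        mult.assoc)
  also have "\<dots> = ennreal (beta_kernel (real a) (real b) x) * (\<integral>\<^sup>+q. ennreal (indicator {0<..} q
      * ggamma_kernel (real a + real b + 1) 2 (s/x + q/(s*x)) / (s*x)) \<partial>lborel)"
    by (simp only: nn_integral_threshold_subst[OF ggamma_kernel_measurable ggamma_kernel_nonneg s True])
  also have "\<dots> = (\<integral>\<^sup>+q. ennreal (beta_kernel (real a) (real b) x) * ennreal (indicator {0<..} q
      * ggamma_kernel (real a + real b + 1) 2 (s/x + q/(s*x)) / (s*x)) \<partial>lborel)"
    by (rule nn_integral_cmult[symmetric]) measurable
  also have "\<dots> = (\<integral>\<^sup>+q. ennreal (beta_kernel (real a) (real b) x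
      * (indicator {0<..} q * ggamma_kernel (real a + real b + 1) 2 (s/x + q/(s*x)) / (s*x))) \<partial>lborel)"
    using True s
    by (intro nn_integral_cong ennreal_mult[symmetric]) (auto simp: beta_kernel_nonneg ggamma_kernel_nonneg)
  finally show ?thesis .
next
  case False
  then show ?thesis by (simp add: beta_kernel_eq_0)
qed

lemma nn_integral_beta_ggamma_kernel_tail:
  fixes a b :: nat and s :: real
  assumes ab: "a \<ge> 1" "b \<ge> 1" and s: "s > 0"
  shows "(\<integral>\<^sup>+x. \<integral>\<^sup>+z. ennreal (beta_kernel (real a) (real b) x * ggamma_kernel (real a + real b + 1) 2 z)
            * indicator {z. s < x * z} z \<partial>lborel \<partial>lborel)
    = ennreal (s^(a+b) / s^(2*b+1) * exp (-s\<^sup>2))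
        * (\<integral>\<^sup>+p. ennreal (tail_kernel (a+b) b s (fst p) (snd p)) \<partial>(lborel \<Otimes>\<^sub>M lborel))"
    (is "?lhs = ennreal ?c * _")
proof -
  define \<Phi> where "\<Phi> x q = beta_kernel (real a) (real b) x
      * (indicator {0<..} q * ggamma_kernel (real a + real b + 1) 2 (s/x + q/(s*x)) / (s*x))" for x q
  have [measurable (raw)]: "(\<lambda>\<omega>. \<Phi> (f \<omega>) (g \<omega>)) \<in> borel_measurable M"
    if [measurable]: "f \<in> borel_measurable M" "g \<in> borel_measurable M" for f g and M :: "'m measure"
    unfolding \<Phi>_def by measurable
  have pointwise: "ennreal (1/s\<^sup>2) * ennreal (\<Phi> (1 - y/s\<^sup>2) q)
      = ennreal ?c * ennreal (tail_kernel (a+b) b s y q)" for y q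
  proof (cases "0 < y \<and> y < s\<^sup>2 \<and> q > 0")
    case True
    then have "1 - y/s\<^sup>2 > 0" using s by (simp add: field_simps)
    then have "\<Phi> (1 - y/s\<^sup>2) q \<ge> 0"
      using s by (simp add: \<Phi>_def beta_kernel_nonneg ggamma_kernel_nonneg)
    moreover have "1/s\<^sup>2 * \<Phi> (1 - y/s\<^sup>2) q = ?c * tail_kernel (a+b) b s y q"
      using beta_ggamma_kernel_subst_eq[OF ab s, of y q] True by (simp add: \<Phi>_def ac_simps)
    ultimately show ?thesis
      using s by (simp add: ennreal_mult[symmetric] tail_kernel_nonneg)
  next
    case False
    then have "\<Phi> (1 - y/s\<^sup>2) q = 0"
      using s by (auto simp: \<Phi>_def beta_kernel_eq_0 field_simps)
    moreover have "tail_kernel (a+b) b s y q = 0"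
      using False by (auto simp: tail_kernel_def)
    ultimately show ?thesis by simp
  qed
  have "?lhs = (\<integral>\<^sup>+x. \<integral>\<^sup>+q. ennreal (\<Phi> x q) \<partial>lborel \<partial>lborel)"
    unfolding \<Phi>_def using s by (simp add: nn_integral_beta_ggamma_kernel_inner_subst)
  also have "\<dots> = ennreal (1/s\<^sup>2) * (\<integral>\<^sup>+y. \<integral>\<^sup>+q. ennreal (\<Phi> (1 - y/s\<^sup>2) q) \<partial>lborel \<partial>lborel)"
    using nn_integral_real_affine[of "\<lambda>x. \<integral>\<^sup>+q. ennreal (\<Phi> x q) \<partial>lborel" "-1/s\<^sup>2" 1] s
    by (simp add: lborel.borel_measurable_nn_integral)
  also have "\<dots> = (\<integral>\<^sup>+y. \<integral>\<^sup>+q. ennreal ?c * ennreal (tail_kernel (a+b) b s y q) \<partial>lborel \<partial>lborel)"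
    by (simp add: nn_integral_cmult[symmetric] pointwise)
  also have "\<dots> = ennreal ?c
      * (\<integral>\<^sup>+p. ennreal (tail_kernel (a+b) b s (fst p) (snd p)) \<partial>(lborel \<Otimes>\<^sub>M lborel))"
    by (simp add: nn_integral_cmult lborel.nn_integral_fst[symmetric])
  finally show ?thesis .
qed

lemma (in prob_space) distributed_pair_of_indep_var:
  assumes "distributed M lborel X f" "distributed M lborel Y g" "indep_var borel X borel Y"
  shows "distributed M (lborel \<Otimes>\<^sub>M lborel) (\<lambda>\<omega>. (X \<omega>, Y \<omega>)) (\<lambda>(x, y). f x * g y)"
proof (rule distributed_joint_indep)
  show "indep_var lborel X lborel Y"
    using assms(3) unfolding indep_var_def indep_vars_def by (simp add: bool.case_eq_if)
qed (use assms in \<open>auto intro: lborel.sigma_finite_measure_axioms\<close>)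

lemma (in prob_space) tail_probability_eq:
  fixes B Z :: "'a \<Rightarrow> real" and a b :: nat
  assumes ab: "a > 0" "b > 0"
    and B: "distributed M lborel B (\<lambda>x. ennreal (beta_density a b x))"
    and Z: "distributed M lborel Z (\<lambda>x. ennreal (ggamma_density (real a + real b + 1) 2 x))"
    and indep: "indep_var borel B borel Z" and s: "s \<ge> 1"
  shows "prob {\<omega> \<in> space M. s < B \<omega> * Z \<omega>}
    = s^(a+b) / s^(2*b+1) * exp (-s\<^sup>2) / (Beta a b * (Gamma ((real a + real b + 1) / 2) / 2))
        * tail_integral (a+b) b s"
    (is "_ = ?c / ?N * _")
proof -
  define S where "S = {p :: real \<times> real. s < fst p * snd p}"
  have "S = {p \<in> space (lborel \<Otimes>\<^sub>M lborel). s < fst p * snd p}"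
    by (simp add: S_def space_pair_measure)
  also have "\<dots> \<in> sets (lborel \<Otimes>\<^sub>M lborel)" by measurable
  finally have S_sets: "S \<in> sets (lborel \<Otimes>\<^sub>M lborel)" .
  have N_pos: "?N > 0" using ab by (simp add: Beta_def)
  have Z_norm: "(LINT z|lborel. ggamma_kernel (real a + real b + 1) 2 z) = Gamma ((real a + real b + 1) / 2) / 2"
    using integral_ggamma_kernel_2[of "a+b"] ab by simp
  have B_norm: "(LINT x|lborel. beta_kernel a b x) = Beta a b"
    using ab by (simp add: integral_beta_kernel)
  have density_eq: "beta_density a b x * ggamma_density (real a + real b + 1) 2 z
      = 1/?N * (beta_kernel a b x * ggamma_kernel (real a + real b + 1) 2 z)" for x z
    unfolding beta_density_def ggamma_density_def B_norm Z_norm by simp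
  have density: "ennreal (beta_density a b x) * ennreal (ggamma_density (real a + real b + 1) 2 z)
      = ennreal (1/?N) * ennreal (beta_kernel a b x * ggamma_kernel (real a + real b + 1) 2 z)" for x z
    using N_pos
    by (simp only: ennreal_mult[symmetric] beta_density_nonneg ggamma_density_nonneg density_eq
        beta_kernel_nonneg ggamma_kernel_nonneg mult_nonneg_nonneg divide_nonneg_pos zero_le_one)
  have "emeasure M {\<omega> \<in> space M. s < B \<omega> * Z \<omega>} = (\<integral>\<^sup>+p. (case p of (x, z) \<Rightarrow>
      ennreal (beta_density a b x) * ennreal (ggamma_density (real a + real b + 1) 2 z)) * indicator S p
      \<partial>(lborel \<Otimes>\<^sub>M lborel))"
    using distributed_emeasure[OF distributed_pair_of_indep_var[OF B Z indep] S_sets]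
    by (simp add: S_def vimage_def Int_def conj_commute)
  also have "\<dots> = ennreal (1/?N) * (\<integral>\<^sup>+x. \<integral>\<^sup>+z. ennreal (beta_kernel a b x
      * ggamma_kernel (real a + real b + 1) 2 z) * indicator {z. s < x * z} z \<partial>lborel \<partial>lborel)"
  proof -
    have "(indicator S (x, z) :: ennreal) = indicator {z. s < x * z} z" for x z
      by (simp add: S_def indicator_def)
    then show ?thesis
      using S_sets
      by (simp add: lborel.nn_integral_fst[symmetric] density nn_integral_cmult[symmetric]
          split_beta' mult.assoc)
  qed
  also have "\<dots> = ennreal (1/?N) * ennreal ?c * ennreal (tail_integral (a+b) b s)"
    using ab s integrable_tail_kernel[OF s]
    by (simp add: nn_integral_beta_ggamma_kernel_tail tail_integral_def nn_integral_eq_integral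
        tail_kernel_nonneg mult.assoc)
  also have "\<dots> = ennreal (?c / ?N) * ennreal (tail_integral (a+b) b s)"
    using N_pos s by (simp add: ennreal_mult[symmetric] ac_simps)
  also have "\<dots> = ennreal (?c / ?N * tail_integral (a+b) b s)"
    using N_pos s by (intro ennreal_mult[symmetric]) (simp_all add: tail_integral_nonneg)
  finally show ?thesis
    using N_pos s by (simp add: measure_def tail_integral_nonneg)
qed

lemma tail_constant_eq:
  fixes a b :: nat and t :: real
  assumes ab: "a > 0" "b > 0" and t: "t > 0"
  shows "(t/2)^(a+b) / (t/2)^(2*b+1) * exp (-(t/2)\<^sup>2)
      / (Beta a b * (Gamma ((real a + real b + 1) / 2) / 2)) * (fact (b-1) / 2^(b+1))
    = c_const ((real a + real b + 2) / 2) a * t powr (-1 + real a - real b) * exp (- (t\<^sup>2) / 4)"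
proof -
  define e where "e = -1 + real a - real b"
  have "(t/2)^(a+b) / (t/2)^(2*b+1) = (t/2) powr real (a+b) / (t/2) powr real (2*b+1)"
    using t by (simp only: powr_realpow[of "t/2"] half_gt_zero)
  also have "\<dots> = (t/2) powr e"
    unfolding powr_diff[symmetric] by (simp add: e_def)
  also have "\<dots> = t powr e / (2 powr (real a - 1) / 2 powr real b)"
    using t by (simp add: e_def powr_divide powr_diff[symmetric])
  finally have power: "(t/2)^(a+b) / (t/2)^(2*b+1) = t powr e * 2^b / 2 powr (real a - 1)"
    by (simp add: powr_realpow)
  have "exp (-(t/2)\<^sup>2) = exp (- (t\<^sup>2) / 4)" by (simp add: power_divide)
  moreover have "Gamma (real b) = fact (b-1)"
    using Gamma_fact[of "b-1"] ab by (simp add: of_nat_diff)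
  moreover have "c_const ((real a + real b + 2) / 2) a
      = Gamma (real a + real b) / (2 powr (real a - 1) * Gamma ((real a + real b + 1) / 2) * Gamma a)"
  proof -
    have "2 * ((real a + real b + 2) / 2) - 2 = real a + real b"
      and "(real a + real b + 2) / 2 - 1/2 = (real a + real b + 1) / 2"
      by (simp_all add: field_simps)
    then show ?thesis unfolding c_const_def by (simp only:)
  qed
  moreover have "Gamma ((real a + real b + 1) / 2) > 0" "Gamma (real a) > 0" "Gamma (real a + real b) > 0"
    using ab by (auto intro: Gamma_real_pos)
  ultimately show ?thesis
    unfolding power e_def[symmetric] Beta_def by (simp add: field_simps)
qed

theorem lemma2:
  fixes M :: "'w measure" and B Z :: "'w \<Rightarrow> real" and a b :: nat
  assumes "prob_space M"
    and "a > 0" and "b > 0"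
    and "distributed M lborel B (\<lambda>x. ennreal (beta_density (real a) (real b) x))"
    and "distributed M lborel Z (\<lambda>x. ennreal (ggamma_density (real a + real b + 1) 2 x))"
    and "prob_space.indep_var M borel B borel Z"
  shows "(\<lambda>t. measure M {\<omega> \<in> space M. 2 * B \<omega> * Z \<omega> > t})
           \<sim>[at_top] (\<lambda>t. c_const ((real a + real b + 2) / 2) (real a)
                         * t powr (-1 + real a - real b) * exp (- (t\<^sup>2) / 4))"
proof -
  interpret prob_space M by fact
  define P where "P s = s^(a+b) / s^(2*b+1) * exp (-s\<^sup>2)
      / (Beta a b * (Gamma ((real a + real b + 1) / 2) / 2))" for s :: real
  have prob: "\<forall>\<^sub>F t in at_top. P (t/2) * tail_integral (a+b) b (t/2)
      = measure M {\<omega> \<in> space M. 2 * B \<omega> * Z \<omega> > t}"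
    using eventually_ge_at_top[of "2::real"]
  proof eventually_elim
    case (elim t)
    have "{\<omega> \<in> space M. 2 * B \<omega> * Z \<omega> > t} = {\<omega> \<in> space M. t/2 < B \<omega> * Z \<omega>}" by auto
    then show ?case
      using tail_probability_eq[OF assms(2-6), of "t/2"] elim by (simp add: P_def)
  qed
  have "filterlim (\<lambda>t::real. t/2) at_top at_top" by real_asymp
  then have "(\<lambda>t. tail_integral (a+b) b (t/2)) \<sim>[at_top] (\<lambda>_. fact (b-1) / 2^(b+1))"
    using assms(3) by (intro tendsto_imp_asymp_equiv_const filterlim_compose[OF tail_integral_tendsto]) auto
  then have equiv: "(\<lambda>t. P (t/2) * tail_integral (a+b) b (t/2)) \<sim>[at_top] (\<lambda>t. P (t/2) * (fact (b-1) / 2^(b+1)))"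
    by (intro asymp_equiv_intros)
  have const: "\<forall>\<^sub>F t in at_top. P (t/2) * (fact (b-1) / 2^(b+1))
      = c_const ((real a + real b + 2) / 2) (real a) * t powr (-1 + real a - real b) * exp (- (t\<^sup>2) / 4)"
    using eventually_gt_at_top[of "0::real"]
    by eventually_elim (unfold P_def, rule tail_constant_eq[OF assms(2,3)])
  show ?thesis by (rule asymp_equiv_transfer[OF equiv prob const])
qed

end
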